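(* $$\sup_{x\in[0,1)}\int_{\Sigma\times\mathbb{R}\times\{x\}}\ \sup_{k\ge1}g_k(\mathbf{j},y,x)\,d\mu_x(\mathbf{j},y,x)<\infty.$$
   Context: $b\ge2$ integer, $\gamma\in(0,1)$, $\phi$ a $\mathbb{Z}$-periodic Lipschitz function. $\Lambda=\{0,\dots,b-1\}$, $\Sigma=\Lambda^{\mathbb{Z}_+}$, $\nu$ uniform on $\Lambda$. $S(x,\mathbf{j})=\sum_{n\ge1}\gamma^{n-1}\phi\big(\frac{x+j_1+j_2b+\cdots+j_nb^{n-1}}{b^n}\big)$. $\mu_x$ is the image of $\nu^{\mathbb{Z}_+}$ under $\mathbf{j}\mapsto(\mathbf{j},S(x,\mathbf{j}),x)$. $B^T_{(\mathbf{j},y,x)}(r)=\{(\mathbf{j}',y',x')\in\Sigma\times\mathbb{R}\times[0,1):|y-y'|\le r\}$, $\mathscr{P}(\mathbf{j},y,x)=[j_1]\times\mathbb{R}\times[0,1)$ with $[j_1]$ the cylinder of sequences with first symbol $j_1$. For $k\in\mathbb{Z}_+$, $g_k(\mathbf{j},y,x)=-\log\frac{\mu_x(B^T_{(\mathbf{j},y,x)}(\gamma^k)\cap\mathscr{P}(\mathbf{j},y,x))}{\mu_x(B^T_{(\mathbf{j},y,x)}(\gamma^k))}$. *)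

theory Defs
  imports "HOL-Probability.Probability"
begin

text \<open>Symbol space Sigma = Lambda^{Z_+}, Lambda = {0,...,b-1}; sequences are indexed by
  the positive integers {1..}, so j 1 is the first symbol j_1.\<close>

definition nuN :: "nat \<Rightarrow> (nat \<Rightarrow> nat) measure" where
  "nuN b = PiM {1..} (\<lambda>_. uniform_count_measure {..<b})"

definition Ssum :: "nat \<Rightarrow> real \<Rightarrow> (real \<Rightarrow> real) \<Rightarrow> real \<Rightarrow> (nat \<Rightarrow> nat) \<Rightarrow> real" where
  "Ssum b \<gamma> \<phi> x j =
     (\<Sum>n. \<gamma> ^ n * \<phi> ((x + (\<Sum>i = 1..Suc n. real (j i) * real b ^ (i - 1))) / real b ^ Suc n))"

definition ambient :: "nat \<Rightarrow> ((nat \<Rightarrow> nat) \<times> real \<times> real) measure" where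
  "ambient b = PiM {1..} (\<lambda>_. count_space {..<b}) \<Otimes>\<^sub>M (lborel \<Otimes>\<^sub>M restrict_space lborel {0..<1})"

definition mu :: "nat \<Rightarrow> real \<Rightarrow> (real \<Rightarrow> real) \<Rightarrow> real \<Rightarrow> ((nat \<Rightarrow> nat) \<times> real \<times> real) measure" where
  "mu b \<gamma> \<phi> x = distr (nuN b) (ambient b) (\<lambda>j. (j, Ssum b \<gamma> \<phi> x j, x))"

definition BT :: "nat \<Rightarrow> (nat \<Rightarrow> nat) \<times> real \<times> real \<Rightarrow> real \<Rightarrow> ((nat \<Rightarrow> nat) \<times> real \<times> real) set" where
  "BT b p r = {(j', y', x') \<in> space (ambient b). \<bar>fst (snd p) - y'\<bar> \<le> r}"

definition Part :: "nat \<Rightarrow> (nat \<Rightarrow> nat) \<times> real \<times> real \<Rightarrow> ((nat \<Rightarrow> nat) \<times> real \<times> real) set" where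
  "Part b p = {(j', y', x') \<in> space (ambient b). j' 1 = fst p 1}"

text \<open>g_k = -log (mu_x(B cap P) / mu_x(B)), with value infinity when the ratio is 0
  (or undefined 0/0), which only happens on a mu_x-null set.\<close>

definition gk :: "nat \<Rightarrow> real \<Rightarrow> (real \<Rightarrow> real) \<Rightarrow> nat \<Rightarrow> (nat \<Rightarrow> nat) \<times> real \<times> real \<Rightarrow> ennreal" where
  "gk b \<gamma> \<phi> k p =
    (let x = snd (snd p);
         q = measure (mu b \<gamma> \<phi> x) (BT b p (\<gamma> ^ k) \<inter> Part b p)
             / measure (mu b \<gamma> \<phi> x) (BT b p (\<gamma> ^ k))
     in if q > 0 then ennreal (- ln q) else \<infinity>)"

end

theory Submission
  imports Defs
begin

text \<open>
  For fixed \<open>x\<close>, \<open>\<mu>\<^sub>x\<close> is the image of \<open>\<nu>\<close> under \<open>j \<mapsto> (j, S(x,j), x)\<close>, so \<open>g\<^sub>k\<close> at a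
  point with first symbol \<open>a\<close> and height \<open>y\<close> is \<open>-log (\<nu>\<^sub>a(I) / \<nu>(I))\<close>, where \<open>\<nu>\<close> is the law
  of \<open>S(x,\<cdot>)\<close>, \<open>\<nu>\<^sub>a\<close> its part coming from the cylinder \<open>[a]\<close> and \<open>I = [y - \<gamma>\<^sup>k, y + \<gamma>\<^sup>k]\<close>.
  Where \<open>sup\<^sub>k g\<^sub>k > n\<close>, some interval centred at \<open>y\<close> has \<open>\<nu>\<^sub>a(I) \<le> e\<^sup>-\<^sup>n \<nu>(I)\<close>. A minimal finite
  subcover of a compact set by such centred intervals covers every point at most twice, so
  \<open>\<nu>\<^sub>a {sup\<^sub>k g\<^sub>k > n} \<le> 2 e\<^sup>-\<^sup>n\<close>. Summing over the \<open>b\<close> symbols and over \<open>n\<close> bounds the integral by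
  \<open>2 b / (1 - e\<^sup>-\<^sup>1)\<close>, uniformly in \<open>x\<close>.
\<close>

lemma closed_intervals_through_point_redundant:
  fixes l u :: "'a \<Rightarrow> real"
  assumes "finite S" "3 \<le> card S" "\<forall>c\<in>S. l c \<le> z \<and> z \<le> u c"
  obtains m i j where "m \<in> S" "i \<in> S" "j \<in> S" "i \<noteq> m" "j \<noteq> m"
    "{l m..u m} \<subseteq> {l i..u i} \<union> {l j..u j}"
proof -
  have "S \<noteq> {}" using assms(2) by auto
  define i where "i = arg_min_on l S"
  define j where "j = arg_min_on (\<lambda>c. - u c) S"
  have i: "i \<in> S" "\<forall>c\<in>S. l i \<le> l c"
    using arg_min_if_finite[OF assms(1) \<open>S \<noteq> {}\<close>, of l] unfolding i_def by (auto simp: not_less)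
  have j: "j \<in> S" "\<forall>c\<in>S. u c \<le> u j"
    using arg_min_if_finite[OF assms(1) \<open>S \<noteq> {}\<close>, of "\<lambda>c. - u c"] unfolding j_def by (auto simp: not_less)
  have "card {i, j} < card S" using assms(2) by (auto simp: card_insert_if)
  then have "\<not> S \<subseteq> {i, j}" using assms(1) by (meson card_mono finite.emptyI finite.insertI not_le)
  then obtain m where m: "m \<in> S" "m \<noteq> i" "m \<noteq> j" by blast
  have "{l m..u m} \<subseteq> {l i..u i} \<union> {l j..u j}"
  proof
    fix t assume "t \<in> {l m..u m}"
    moreover have "l i \<le> l m" "u m \<le> u j" "z \<le> u i" "l j \<le> z"
      using i j m assms(3) by auto
    ultimately show "t \<in> {l i..u i} \<union> {l j..u j}" by (cases "t \<le> z") auto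
  qed
  with i j m that show ?thesis by simp
qed

lemma finite_interval_cover_overlap_le_2:
  fixes l u :: "'a \<Rightarrow> real"
  assumes "finite C" "K \<subseteq> (\<Union>c\<in>C. {l c..u c})"
  obtains D where "D \<subseteq> C" "K \<subseteq> (\<Union>c\<in>D. {l c..u c})" "\<And>z. card {c\<in>D. z \<in> {l c..u c}} \<le> 2"
proof -
  define covers where "covers D \<longleftrightarrow> D \<subseteq> C \<and> K \<subseteq> (\<Union>c\<in>D. {l c..u c})" for D
  have "covers C" using assms(2) unfolding covers_def by simp
  then obtain D where D: "covers D" and least: "\<And>D'. covers D' \<Longrightarrow> card D \<le> card D'"
    using ex_has_least_nat[of covers C card] by metis
  have "finite D" using D assms(1) unfolding covers_def by (auto intro: finite_subset)
  have overlap: "card {c\<in>D. z \<in> {l c..u c}} \<le> 2" for z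
  proof (rule ccontr)
    assume "\<not> card {c\<in>D. z \<in> {l c..u c}} \<le> 2"
    then have three: "3 \<le> card {c\<in>D. z \<in> {l c..u c}}" by simp
    have "finite {c\<in>D. z \<in> {l c..u c}}" using \<open>finite D\<close> by simp
    then obtain m i j where "m \<in> {c\<in>D. z \<in> {l c..u c}}"
      "i \<in> {c\<in>D. z \<in> {l c..u c}}" "j \<in> {c\<in>D. z \<in> {l c..u c}}" "i \<noteq> m" "j \<noteq> m"
      and redundant: "{l m..u m} \<subseteq> {l i..u i} \<union> {l j..u j}"
      using three by (rule closed_intervals_through_point_redundant) auto
    then have m: "m \<in> D" and ij: "i \<in> D" "j \<in> D" "i \<noteq> m" "j \<noteq> m" by auto
    have "K \<subseteq> (\<Union>c\<in>D - {m}. {l c..u c})"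
    proof
      fix t assume "t \<in> K"
      then obtain c where "c \<in> D" "t \<in> {l c..u c}" using D unfolding covers_def by blast
      moreover have "t \<in> {l i..u i} \<union> {l j..u j}" if "c = m"
        using redundant that \<open>t \<in> {l c..u c}\<close> by blast
      ultimately show "t \<in> (\<Union>c\<in>D - {m}. {l c..u c})"
        using ij by blast
    qed
    then have "card D \<le> card (D - {m})" using D by (intro least) (auto simp: covers_def)
    moreover have "card (D - {m}) < card D" using \<open>finite D\<close> m by (rule card_Diff1_less)
    ultimately show False by linarith
  qed
  from D have "D \<subseteq> C" "K \<subseteq> (\<Union>c\<in>D. {l c..u c})" by (simp_all add: covers_def)
  then show ?thesis using overlap by (rule that)
qed

lemma sum_measure_le_of_bounded_overlap:
  assumes "finite_measure N" "finite D" "\<And>c. c \<in> D \<Longrightarrow> I c \<in> sets N"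
    and "\<And>z. card {c\<in>D. z \<in> I c} \<le> m"
  shows "(\<Sum>c\<in>D. measure N (I c)) \<le> m * measure N (space N)"
proof -
  interpret finite_measure N by fact
  have integrable: "integrable N (indicator (I c) :: _ \<Rightarrow> real)" if "c \<in> D" for c
    using assms(3)[OF that] by (simp add: emeasure_eq_measure)
  have "(\<Sum>c\<in>D. measure N (I c)) = (\<integral>z. (\<Sum>c\<in>D. indicator (I c) z) \<partial>N)"
    using assms(3) integrable by (simp add: Bochner_Integration.integral_sum)
  also have "\<dots> \<le> (\<integral>z. real m \<partial>N)"
  proof (rule integral_mono)
    fix z
    have "(\<Sum>c\<in>D. indicator (I c) z :: real) = card {c\<in>D. z \<in> I c}"
      using assms(2) by (simp add: indicator_def sum.If_cases Int_def conj_commute)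
    then show "(\<Sum>c\<in>D. indicator (I c) z :: real) \<le> real m" using assms(4)[of z] by simp
  qed (use integrable in auto)
  also have "\<dots> = m * measure N (space N)" by simp
  finally show ?thesis .
qed

lemma measure_compact_le_of_local_interval_ratio:
  fixes N N' :: "real measure"
  assumes N: "finite_measure N" "sets N = sets borel"
    and N': "finite_measure N'" "sets N' = sets borel"
    and "0 \<le> \<theta>" "compact K"
    and local_ratio: "\<And>y. y \<in> K \<Longrightarrow> \<exists>r>0. measure N' {y-r..y+r} \<le> \<theta> * measure N {y-r..y+r}"
  shows "measure N' K \<le> 2 * \<theta> * measure N (space N)"
proof -
  have "\<forall>y\<in>K. \<exists>r>0. measure N' {y-r..y+r} \<le> \<theta> * measure N {y-r..y+r}"
    using local_ratio by blast
  then obtain r where r: "\<forall>y\<in>K. 0 < r y \<and> measure N' {y - r y..y + r y} \<le> \<theta> * measure N {y - r y..y + r y}"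
    by (auto dest: bchoice)
  obtain C where "C \<subseteq> K" "finite C" and C_cover: "K \<subseteq> (\<Union>c\<in>C. ball c (r c))"
  proof (rule compactE_image[OF \<open>compact K\<close>, of K "\<lambda>y. ball y (r y)"])
    show "K \<subseteq> (\<Union>y\<in>K. ball y (r y))" using r by auto
  qed (use that in auto)
  have "K \<subseteq> (\<Union>c\<in>C. {c - r c..c + r c})"
  proof
    fix t assume "t \<in> K"
    then obtain c where "c \<in> C" "t \<in> ball c (r c)" using C_cover by blast
    then have "t \<in> {c - r c..c + r c}" by (auto simp: dist_real_def)
    with \<open>c \<in> C\<close> show "t \<in> (\<Union>c\<in>C. {c - r c..c + r c})" by blast
  qed
  then obtain D where "D \<subseteq> C" and D_cover: "K \<subseteq> (\<Union>c\<in>D. {c - r c..c + r c})"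
    and overlap: "\<And>z. card {c\<in>D. z \<in> {c - r c..c + r c}} \<le> 2"
    by (rule finite_interval_cover_overlap_le_2[OF \<open>finite C\<close>]) iprover
  have "finite D" using \<open>D \<subseteq> C\<close> \<open>finite C\<close> by (rule finite_subset)
  have intervals_N': "(\<lambda>c. {c - r c..c + r c}) ` D \<subseteq> sets N'"
    by (simp add: N'(2) image_subset_iff)
  have "measure N' K \<le> measure N' (\<Union>c\<in>D. {c - r c..c + r c})"
    using intervals_N' \<open>finite D\<close>
    by (intro finite_measure.finite_measure_mono[OF N'(1) D_cover] sets.finite_UN) auto
  also have "\<dots> \<le> (\<Sum>c\<in>D. measure N' {c - r c..c + r c})"
    using intervals_N' \<open>finite D\<close>
    by (intro finite_measure.finite_measure_subadditive_finite[OF N'(1)])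
  also have "\<dots> \<le> (\<Sum>c\<in>D. \<theta> * measure N {c - r c..c + r c})"
    using r \<open>D \<subseteq> C\<close> \<open>C \<subseteq> K\<close> by (intro sum_mono) auto
  also have "\<dots> = \<theta> * (\<Sum>c\<in>D. measure N {c - r c..c + r c})"
    by (simp add: sum_distrib_left)
  also have "\<dots> \<le> \<theta> * (2 * measure N (space N))"
    using sum_measure_le_of_bounded_overlap[OF N(1) \<open>finite D\<close> _ overlap] N(2) \<open>0 \<le> \<theta>\<close>
    by (intro mult_left_mono) auto
  finally show ?thesis by (simp add: ac_simps)
qed

lemma emeasure_le_of_local_interval_ratio:
  fixes N N' :: "real measure"
  assumes N: "finite_measure N" "sets N = sets borel"
    and N': "finite_measure N'" "sets N' = sets borel"
    and "0 \<le> \<theta>" "E \<in> sets borel"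
    and local_ratio: "\<And>y. y \<in> E \<Longrightarrow> \<exists>r>0. measure N' {y-r..y+r} \<le> \<theta> * measure N {y-r..y+r}"
  shows "emeasure N' E \<le> ennreal (2 * \<theta> * measure N (space N))"
proof -
  have "emeasure N' E = (SUP K \<in> {K. K \<subseteq> E \<and> compact K}. emeasure N' K)"
    using N' \<open>E \<in> sets borel\<close> by (intro inner_regular) (auto simp: finite_measure.emeasure_finite)
  also have "\<dots> \<le> ennreal (2 * \<theta> * measure N (space N))"
  proof (rule SUP_least)
    fix K assume "K \<in> {K. K \<subseteq> E \<and> compact K}"
    then have "measure N' K \<le> 2 * \<theta> * measure N (space N)"
      using local_ratio by (intro measure_compact_le_of_local_interval_ratio[OF N N' \<open>0 \<le> \<theta>\<close>]) auto
    then show "emeasure N' K \<le> ennreal (2 * \<theta> * measure N (space N))"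
      by (simp add: finite_measure.emeasure_eq_measure[OF N'(1)] ennreal_leI)
  qed
  finally show ?thesis .
qed

lemma borel_measurable_measure_centered_interval:
  fixes N :: "real measure"
  assumes "finite_measure N" "sets N = sets borel" "0 \<le> r"
  shows "(\<lambda>y. measure N {y-r..y+r}) \<in> borel_measurable borel"
proof -
  interpret finite_measure N by fact
  have diff: "measure N {y-r..y+r} = measure N {..y+r} - measure N {..<y-r}" for y
  proof -
    have "{y-r..y+r} = {..y+r} - {..<y-r}" by auto
    moreover have "{..<y-r} \<subseteq> {..y+r}" using assms(3) by auto
    ultimately show ?thesis using assms(2) by (simp add: finite_measure_Diff)
  qed
  have "mono (\<lambda>t. measure N {..t})" "mono (\<lambda>t. measure N {..<t})"
    using assms(2) by (intro monoI finite_measure_mono; auto)+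
  then have "(\<lambda>y. measure N {..y+r}) \<in> borel_measurable borel"
    "(\<lambda>y. measure N {..<y-r}) \<in> borel_measurable borel"
    by (auto intro: measurable_compose[rotated, OF borel_measurable_mono])
  then show ?thesis unfolding diff by (rule borel_measurable_diff)
qed

lemma ennreal_le_suminf_of_nat_less: "v \<le> (\<Sum>n. of_bool (of_nat n < v) :: ennreal)"
proof -
  define S where "S = (\<Sum>n. of_bool (of_nat n < v) :: ennreal)"
  have below: "of_nat m \<le> S" if "\<forall>n<m. of_nat n < v" for m
  proof -
    have "of_nat m = (\<Sum>n<m. of_bool (of_nat n < v) :: ennreal)"
      using that by simp
    also have "\<dots> \<le> S" unfolding S_def by (rule sum_le_suminf) auto
    finally show ?thesis .
  qed
  show ?thesis
  proof (cases v)
    case (real t)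
    have "\<forall>n < nat \<lceil>t\<rceil>. of_nat n < v"
    proof (intro allI impI)
      fix n assume "n < nat \<lceil>t\<rceil>"
      then have "real n < t" by linarith
      then show "of_nat n < v"
        using real by (simp add: ennreal_of_nat_eq_real_of_nat ennreal_less_iff)
    qed
    then have "of_nat (nat \<lceil>t\<rceil>) \<le> S" by (rule below)
    moreover have "v \<le> of_nat (nat \<lceil>t\<rceil>)"
      using real by (simp add: ennreal_of_nat_eq_real_of_nat ennreal_leI)
    ultimately show ?thesis unfolding S_def by (rule order_trans[rotated])
  next
    case top
    then have "(SUP m. of_nat m :: ennreal) \<le> S"
      using below by (intro SUP_least) (simp add: of_nat_less_top)
    then show ?thesis unfolding S_def by (simp add: ennreal_SUP_of_nat_eq_top top_unique)
  qed
qed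

lemma nn_integral_le_suminf_emeasure_of_nat_less:
  assumes [measurable]: "f \<in> borel_measurable M"
  shows "(\<integral>\<^sup>+x. f x \<partial>M) \<le> (\<Sum>n. emeasure M {x\<in>space M. of_nat n < f x})"
proof -
  have "(\<integral>\<^sup>+x. f x \<partial>M) \<le> (\<integral>\<^sup>+x. (\<Sum>n. indicator {x\<in>space M. of_nat n < f x} x) \<partial>M)"
  proof (rule nn_integral_mono)
    fix x assume "x \<in> space M"
    then have "(\<Sum>n. indicator {x\<in>space M. of_nat n < f x} x) = (\<Sum>n. of_bool (of_nat n < f x) :: ennreal)"
      by (simp add: indicator_def)
    then show "f x \<le> (\<Sum>n. indicator {x\<in>space M. of_nat n < f x} x)"
      using ennreal_le_suminf_of_nat_less[of "f x"] by simp
  qed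
  also have "\<dots> = (\<Sum>n. emeasure M {x\<in>space M. of_nat n < f x})"
    by (subst nn_integral_suminf) auto
  finally show ?thesis .
qed

lemma suminf_ennreal_mult_exp_neg:
  assumes "0 \<le> c"
  shows "(\<Sum>n. ennreal (c * exp (- real n))) = ennreal (c / (1 - exp (-1)))"
proof -
  have "exp (- real n) = exp (-1) ^ n" for n
    using exp_of_nat_mult[of n "-1"] by simp
  moreover have "(\<lambda>n. exp (-1) ^ n) sums (1 / (1 - exp (-1 :: real)))"
    by (rule geometric_sums) simp
  ultimately have "(\<lambda>n. c * exp (- real n)) sums (c * (1 / (1 - exp (-1))))"
    by (simp only:) (rule sums_mult)
  moreover have "0 \<le> c / (1 - exp (-1))" using assms by simp
  ultimately have "(\<lambda>n. ennreal (c * exp (- real n))) sums ennreal (c / (1 - exp (-1)))"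
    using assms by simp
  then show ?thesis by (rule sums_unique[symmetric])
qed

definition surprisal :: "real \<Rightarrow> ennreal" where
  "surprisal q = (if q > 0 then ennreal (- ln q) else \<infinity>)"

lemma borel_measurable_surprisal [measurable]: "surprisal \<in> borel_measurable borel"
  unfolding surprisal_def by measurable

lemma le_exp_mult_of_surprisal_gt:
  assumes "0 \<le> a" "a \<le> v" "of_nat n < surprisal (a / v)"
  shows "a \<le> exp (- real n) * v"
proof (cases "a / v > 0")
  case True
  then have "0 < v" using assms(1,2) by (simp add: zero_less_divide_iff)
  have "ennreal (real n) < ennreal (- ln (a / v))"
    using True assms(3) by (simp add: surprisal_def ennreal_of_nat_eq_real_of_nat)
  then have "ln (a / v) < - real n" by (simp add: ennreal_less_iff)
  have "a / v = exp (ln (a / v))" using True by simp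
  also have "\<dots> < exp (- real n)" using \<open>ln (a / v) < - real n\<close> by simp
  finally show ?thesis using \<open>0 < v\<close> by (simp add: divide_less_eq)
next
  case False
  have "\<not> 0 < a"
  proof
    assume "0 < a"
    with assms(2) have "0 < a / v" by simp
    with False show False by simp
  qed
  with assms(1,2) show ?thesis by simp
qed

text \<open>In the application \<open>M = \<nu>\<close>, \<open>S = S(x,\<cdot>)\<close>, \<open>c\<close> is the first symbol and \<open>\<rho> k = \<gamma>\<^sup>k\<close>;
  then \<open>max_surprisal (c \<omega>) (S \<omega>)\<close> is \<open>sup\<^sub>k g\<^sub>k\<close> at the image of \<open>\<omega>\<close> in \<open>\<mu>\<^sub>x\<close>.\<close>

locale real_rv_finite_partition = prob_space M for M :: "'a measure" +
  fixes S :: "'a \<Rightarrow> real" and c :: "'a \<Rightarrow> 'b" and A :: "'b set"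
    and \<rho> :: "nat \<Rightarrow> real" and K :: "nat set"
  assumes measurable_S [measurable]: "S \<in> borel_measurable M"
    and measurable_c [measurable]: "c \<in> measurable M (count_space A)"
    and finite_A: "finite A"
    and radius_pos: "\<And>k. k \<in> K \<Longrightarrow> 0 < \<rho> k"
begin

definition max_surprisal :: "'b \<Rightarrow> real \<Rightarrow> ennreal" where
  "max_surprisal a y = (SUP k\<in>K. surprisal
     (prob {\<omega>\<in>space M. \<bar>y - S \<omega>\<bar> \<le> \<rho> k \<and> c \<omega> = a} / prob {\<omega>\<in>space M. \<bar>y - S \<omega>\<bar> \<le> \<rho> k}))"

definition law :: "real measure" where
  "law = distr M borel S"

definition law_on :: "'b \<Rightarrow> real measure" where
  "law_on a = distr (restrict_space M {\<omega>\<in>space M. c \<omega> = a}) borel S"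

lemma sets_label [measurable]: "{\<omega>\<in>space M. c \<omega> = a} \<in> sets M"
proof -
  have "{\<omega>\<in>space M. c \<omega> = a} = c -` ({a} \<inter> A) \<inter> space M"
    using measurable_space[OF measurable_c] by auto
  also have "\<dots> \<in> sets M" by (rule measurable_sets[OF measurable_c]) simp
  finally show ?thesis .
qed

lemma sets_law [simp]: "sets law = sets borel"
  and sets_law_on [simp]: "sets (law_on a) = sets borel"
  by (simp_all add: law_def law_on_def)

lemma prob_space_law: "prob_space law"
  unfolding law_def by (rule prob_space_distr) simp

lemma finite_measure_law: "finite_measure law"
  using prob_space_law by (simp add: prob_space_def)

lemma finite_measure_law_on: "finite_measure (law_on a)"
  unfolding law_on_def
  by (intro finite_measure.finite_measure_distr finite_measure_restrict_space measurable_restrict_space1)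
    (simp_all add: finite_measure_axioms)

lemma emeasure_law_on:
  assumes "E \<in> sets borel"
  shows "emeasure (law_on a) E = emeasure M {\<omega>\<in>space M. S \<omega> \<in> E \<and> c \<omega> = a}"
proof -
  have "emeasure (law_on a) E
      = emeasure (restrict_space M {\<omega>\<in>space M. c \<omega> = a}) (S -` E \<inter> {\<omega>\<in>space M. c \<omega> = a})"
    unfolding law_on_def using assms
    by (subst emeasure_distr) (auto intro: measurable_restrict_space1 simp: space_restrict_space)
  also have "\<dots> = emeasure M {\<omega>\<in>space M. S \<omega> \<in> E \<and> c \<omega> = a}"
    using assms by (subst emeasure_restrict_space) (auto intro!: arg_cong[where f = "emeasure M"])
  finally show ?thesis .
qed

lemma measure_law_on:
  "E \<in> sets borel \<Longrightarrow> measure (law_on a) E = prob {\<omega>\<in>space M. S \<omega> \<in> E \<and> c \<omega> = a}"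
  by (simp add: measure_def emeasure_law_on)

lemma measure_law: "E \<in> sets borel \<Longrightarrow> measure law E = prob {\<omega>\<in>space M. S \<omega> \<in> E}"
  unfolding law_def by (subst measure_distr) (auto intro: arg_cong[where f = prob])

lemma measure_law_on_le_law:
  assumes "E \<in> sets borel"
  shows "measure (law_on a) E \<le> measure law E"
proof -
  have "{\<omega>\<in>space M. S \<omega> \<in> E} \<in> sets M" using assms by measurable
  then show ?thesis
    using assms by (simp add: measure_law_on measure_law) (rule finite_measure_mono; auto)
qed

lemma max_surprisal_eq_laws:
  "max_surprisal a y
     = (SUP k\<in>K. surprisal (measure (law_on a) {y - \<rho> k..y + \<rho> k} / measure law {y - \<rho> k..y + \<rho> k}))"
proof -
  have "{\<omega>\<in>space M. S \<omega> \<in> {y - r..y + r}} = {\<omega>\<in>space M. \<bar>y - S \<omega>\<bar> \<le> r}"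
    "{\<omega>\<in>space M. S \<omega> \<in> {y - r..y + r} \<and> c \<omega> = a} = {\<omega>\<in>space M. \<bar>y - S \<omega>\<bar> \<le> r \<and> c \<omega> = a}"
    for r by (auto simp: abs_le_iff)
  then show ?thesis by (simp add: max_surprisal_def measure_law measure_law_on)
qed

lemma borel_measurable_max_surprisal [measurable]: "max_surprisal a \<in> borel_measurable borel"
proof -
  have [measurable]: "(\<lambda>y. measure (law_on a) {y - \<rho> k..y + \<rho> k}) \<in> borel_measurable borel"
    "(\<lambda>y. measure law {y - \<rho> k..y + \<rho> k}) \<in> borel_measurable borel" if "k \<in> K" for k
    using radius_pos[OF that] finite_measure_law_on finite_measure_law
    by (auto intro!: borel_measurable_measure_centered_interval)
  show ?thesis unfolding max_surprisal_eq_laws by measurable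
qed

lemma emeasure_max_surprisal_gt:
  "emeasure M {\<omega>\<in>space M. c \<omega> = a \<and> of_nat n < max_surprisal a (S \<omega>)} \<le> ennreal (2 * exp (- real n))"
proof -
  define E where "E = {y. of_nat n < max_surprisal a y}"
  have E: "E \<in> sets borel" unfolding E_def by measurable
  have "emeasure M {\<omega>\<in>space M. c \<omega> = a \<and> of_nat n < max_surprisal a (S \<omega>)} = emeasure (law_on a) E"
    using E by (simp add: emeasure_law_on E_def conj_commute)
  also have "\<dots> \<le> ennreal (2 * exp (- real n) * measure law (space law))"
  proof (rule emeasure_le_of_local_interval_ratio[OF finite_measure_law sets_law finite_measure_law_on sets_law_on _ E])
    fix y assume "y \<in> E"
    then obtain k where "k \<in> K" and k: "of_nat n < surprisal
        (measure (law_on a) {y - \<rho> k..y + \<rho> k} / measure law {y - \<rho> k..y + \<rho> k})"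
      unfolding E_def max_surprisal_eq_laws by (auto simp: less_SUP_iff)
    have "measure (law_on a) {y - \<rho> k..y + \<rho> k} \<le> exp (- real n) * measure law {y - \<rho> k..y + \<rho> k}"
      using measure_law_on_le_law k by (intro le_exp_mult_of_surprisal_gt) auto
    with radius_pos[OF \<open>k \<in> K\<close>]
    show "\<exists>r>0. measure (law_on a) {y-r..y+r} \<le> exp (- real n) * measure law {y-r..y+r}"
      by blast
  qed simp
  also have "measure law (space law) = 1"
    using prob_space_law by (rule prob_space.prob_space)
  finally show ?thesis by simp
qed

lemma borel_measurable_max_surprisal_label:
  "(\<lambda>\<omega>. max_surprisal (c \<omega>) (S \<omega>)) \<in> borel_measurable M"
  by (rule measurable_compose_countable'[OF _ measurable_c countable_finite[OF finite_A]]) measurable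

lemma emeasure_max_surprisal_label_gt:
  "emeasure M {\<omega>\<in>space M. of_nat n < max_surprisal (c \<omega>) (S \<omega>)} \<le> ennreal (2 * card A * exp (- real n))"
proof -
  define L where "L a = {\<omega>\<in>space M. c \<omega> = a \<and> of_nat n < max_surprisal a (S \<omega>)}" for a
  have L: "L a \<in> sets M" for a unfolding L_def by measurable
  have "{\<omega>\<in>space M. of_nat n < max_surprisal (c \<omega>) (S \<omega>)} \<subseteq> (\<Union>a\<in>A. L a)"
    using measurable_space[OF measurable_c] unfolding L_def by auto
  then have "emeasure M {\<omega>\<in>space M. of_nat n < max_surprisal (c \<omega>) (S \<omega>)} \<le> emeasure M (\<Union>a\<in>A. L a)"
    using L finite_A by (intro emeasure_mono) auto
  also have "\<dots> \<le> (\<Sum>a\<in>A. emeasure M (L a))"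
    using L finite_A by (intro emeasure_subadditive_finite) auto
  also have "\<dots> \<le> (\<Sum>a\<in>A. ennreal (2 * exp (- real n)))"
    unfolding L_def by (intro sum_mono emeasure_max_surprisal_gt)
  also have "\<dots> = ennreal (2 * card A * exp (- real n))"
    by (simp add: ennreal_of_nat_eq_real_of_nat ennreal_mult'[symmetric] mult_ac)
  finally show ?thesis .
qed

theorem nn_integral_max_surprisal_le:
  "(\<integral>\<^sup>+\<omega>. max_surprisal (c \<omega>) (S \<omega>) \<partial>M) \<le> ennreal (2 * card A / (1 - exp (-1)))"
proof -
  have "(\<integral>\<^sup>+\<omega>. max_surprisal (c \<omega>) (S \<omega>) \<partial>M)
      \<le> (\<Sum>n. emeasure M {\<omega>\<in>space M. of_nat n < max_surprisal (c \<omega>) (S \<omega>)})"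
    by (rule nn_integral_le_suminf_emeasure_of_nat_less[OF borel_measurable_max_surprisal_label])
  also have "\<dots> \<le> (\<Sum>n. ennreal (2 * card A * exp (- real n)))"
    by (intro suminf_le emeasure_max_surprisal_label_gt) auto
  also have "\<dots> = ennreal (2 * card A / (1 - exp (-1)))"
    by (rule suminf_ennreal_mult_exp_neg) simp
  finally show ?thesis .
qed

end

lemma prob_space_nuN: "1 \<le> b \<Longrightarrow> prob_space (nuN b)"
  unfolding nuN_def
  by (intro prob_space_PiM prob_space_uniform_count_measure) (auto simp: lessThan_empty_iff)

lemma sets_nuN: "sets (nuN b) = sets (PiM {1..} (\<lambda>_. count_space {..<b}))"
  unfolding nuN_def by (intro sets_PiM_cong) (auto simp: sets_uniform_count_measure)

lemma measurable_nuN_component: "1 \<le> i \<Longrightarrow> (\<lambda>j. j i) \<in> measurable (nuN b) (count_space {..<b})"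
  unfolding measurable_cong_sets[OF sets_nuN refl]
  by (intro measurable_component_singleton) auto

lemma borel_measurable_Ssum:
  assumes [measurable]: "\<phi> \<in> borel_measurable borel"
  shows "Ssum b \<gamma> \<phi> x \<in> borel_measurable (nuN b)"
proof -
  have [measurable]: "(\<lambda>j. real (j i)) \<in> borel_measurable (nuN b)" if "1 \<le> i" for i
    using measurable_nuN_component[OF that] by (rule measurable_compose) simp
  show ?thesis
    unfolding Ssum_def by measurable
qed

lemma measurable_embedding_ambient:
  assumes "\<phi> \<in> borel_measurable borel" "x \<in> {0..<1}"
  shows "(\<lambda>j. (j, Ssum b \<gamma> \<phi> x j, x)) \<in> measurable (nuN b) (ambient b)"
  unfolding ambient_def
proof (intro measurable_Pair)
  show "(\<lambda>j. j) \<in> measurable (nuN b) (PiM {1..} (\<lambda>_. count_space {..<b}))"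
    by (simp add: measurable_ident_sets sets_nuN)
  show "Ssum b \<gamma> \<phi> x \<in> measurable (nuN b) lborel"
    using borel_measurable_Ssum[OF assms(1)] by simp
  show "(\<lambda>j. x) \<in> measurable (nuN b) (restrict_space lborel {0..<1})"
    using assms(2) by (intro measurable_const) (auto simp: space_restrict_space)
qed

lemma measurable_ambient_first_symbol: "(\<lambda>p. fst p 1) \<in> measurable (ambient b) (count_space {..<b})"
  unfolding ambient_def
  by (rule measurable_compose[OF measurable_fst]) (intro measurable_component_singleton, auto)

lemma borel_measurable_ambient_height [measurable]: "(\<lambda>p. fst (snd p)) \<in> borel_measurable (ambient b)"
  unfolding ambient_def by measurable

lemma borel_measurable_ambient_base [measurable]: "(\<lambda>p. snd (snd p)) \<in> borel_measurable (ambient b)"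
proof -
  have "(\<lambda>p. snd (snd p)) \<in> measurable (ambient b) (restrict_space lborel {0..<1})"
    unfolding ambient_def by measurable
  then show ?thesis by (rule measurable_compose) (simp add: measurable_restrict_space1)
qed

lemma sets_BT [measurable]: "BT b p r \<in> sets (ambient b)"
proof -
  have "BT b p r = {q\<in>space (ambient b). fst (snd q) \<in> {fst (snd p) - r..fst (snd p) + r}}"
    unfolding BT_def by (auto simp: abs_le_iff)
  also have "\<dots> \<in> sets (ambient b)" by measurable
  finally show ?thesis .
qed

lemma sets_Part [measurable]: "Part b p \<in> sets (ambient b)"
proof -
  have "Part b p = (\<lambda>q. fst q 1) -` ({fst p 1} \<inter> {..<b}) \<inter> space (ambient b)"
    using measurable_space[OF measurable_ambient_first_symbol[of b]] unfolding Part_def by auto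
  also have "\<dots> \<in> sets (ambient b)"
    by (rule measurable_sets[OF measurable_ambient_first_symbol]) simp
  finally show ?thesis .
qed

lemma measure_mu:
  assumes "\<phi> \<in> borel_measurable borel" "x \<in> {0..<1}" "B \<in> sets (ambient b)"
  shows "measure (mu b \<gamma> \<phi> x) B = measure (nuN b) {j\<in>space (nuN b). (j, Ssum b \<gamma> \<phi> x j, x) \<in> B}"
  unfolding mu_def using measurable_embedding_ambient[OF assms(1,2)] assms(3)
  by (subst measure_distr) (auto intro: arg_cong[where f = "measure (nuN b)"])

lemma measure_mu_BT:
  assumes "\<phi> \<in> borel_measurable borel" "x \<in> {0..<1}"
  shows "measure (mu b \<gamma> \<phi> x) (BT b p r)
    = measure (nuN b) {j\<in>space (nuN b). \<bar>fst (snd p) - Ssum b \<gamma> \<phi> x j\<bar> \<le> r}"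
proof -
  have "measure (mu b \<gamma> \<phi> x) (BT b p r)
      = measure (nuN b) {j\<in>space (nuN b). (j, Ssum b \<gamma> \<phi> x j, x) \<in> BT b p r}"
    by (rule measure_mu[OF assms sets_BT])
  also have "{j\<in>space (nuN b). (j, Ssum b \<gamma> \<phi> x j, x) \<in> BT b p r}
      = {j\<in>space (nuN b). \<bar>fst (snd p) - Ssum b \<gamma> \<phi> x j\<bar> \<le> r}"
    using measurable_space[OF measurable_embedding_ambient[where b = b and \<gamma> = \<gamma>, OF assms]]
    by (auto simp: BT_def)
  finally show ?thesis .
qed

lemma measure_mu_BT_Int_Part:
  assumes "\<phi> \<in> borel_measurable borel" "x \<in> {0..<1}"
  shows "measure (mu b \<gamma> \<phi> x) (BT b p r \<inter> Part b p)
    = measure (nuN b) {j\<in>space (nuN b). \<bar>fst (snd p) - Ssum b \<gamma> \<phi> x j\<bar> \<le> r \<and> j 1 = fst p 1}"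
proof -
  have "measure (mu b \<gamma> \<phi> x) (BT b p r \<inter> Part b p)
      = measure (nuN b) {j\<in>space (nuN b). (j, Ssum b \<gamma> \<phi> x j, x) \<in> BT b p r \<inter> Part b p}"
    by (rule measure_mu[OF assms]) measurable
  also have "{j\<in>space (nuN b). (j, Ssum b \<gamma> \<phi> x j, x) \<in> BT b p r \<inter> Part b p}
      = {j\<in>space (nuN b). \<bar>fst (snd p) - Ssum b \<gamma> \<phi> x j\<bar> \<le> r \<and> j 1 = fst p 1}"
    using measurable_space[OF measurable_embedding_ambient[where b = b and \<gamma> = \<gamma>, OF assms]]
    by (auto simp: BT_def Part_def)
  finally show ?thesis .
qed

lemma gk_eq_surprisal:
  "gk b \<gamma> \<phi> k p = surprisal (measure (mu b \<gamma> \<phi> (snd (snd p))) (BT b p (\<gamma> ^ k) \<inter> Part b p)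
                                / measure (mu b \<gamma> \<phi> (snd (snd p))) (BT b p (\<gamma> ^ k)))"
  by (simp add: gk_def surprisal_def Let_def)

lemma real_rv_finite_partition_nuN:
  assumes "1 \<le> b" "0 < \<gamma>" "\<phi> \<in> borel_measurable borel"
  shows "real_rv_finite_partition (nuN b) (Ssum b \<gamma> \<phi> x) (\<lambda>j. j 1) {..<b} (\<lambda>k. \<gamma> ^ k) {1..}"
  unfolding real_rv_finite_partition_def real_rv_finite_partition_axioms_def
  using assms prob_space_nuN borel_measurable_Ssum measurable_nuN_component by simp

lemma nn_integral_SUP_gk_le:
  assumes "1 \<le> b" "0 < \<gamma>" "\<phi> \<in> borel_measurable borel" "x \<in> {0..<1}"
  shows "(\<integral>\<^sup>+p. (SUP k\<in>{1..}. gk b \<gamma> \<phi> k p) \<partial>mu b \<gamma> \<phi> x) \<le> ennreal (2 * real b / (1 - exp (-1)))"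
proof -
  interpret real_rv_finite_partition "nuN b" "Ssum b \<gamma> \<phi> x" "\<lambda>j. j 1" "{..<b}" "\<lambda>k. \<gamma> ^ k" "{1..}"
    using assms(1-3) by (rule real_rv_finite_partition_nuN)
  note embedding = measurable_embedding_ambient[where b = b and \<gamma> = \<gamma>, OF assms(3,4)]
  have SUP_gk: "(SUP k\<in>{1..}. gk b \<gamma> \<phi> k p) = max_surprisal (fst p 1) (fst (snd p))"
    if "snd (snd p) = x" for p
    unfolding max_surprisal_def using that assms(3,4)
    by (simp add: gk_eq_surprisal measure_mu_BT measure_mu_BT_Int_Part)
  have max_surprisal_measurable: "(\<lambda>p. max_surprisal (fst p 1) (fst (snd p))) \<in> borel_measurable (ambient b)"
    by (rule measurable_compose_countable'[OF _ measurable_ambient_first_symbol]) measurable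
  \<comment> \<open>\<open>mu\<close> lives on the fibre over \<open>x\<close>, the only place where the (possibly non-measurable)
    integrand is identified with a measurable one.\<close>
  have "AE p in mu b \<gamma> \<phi> x. snd (snd p) = x"
    unfolding mu_def by (subst AE_distr_iff[OF embedding]) auto
  then have "(\<integral>\<^sup>+p. (SUP k\<in>{1..}. gk b \<gamma> \<phi> k p) \<partial>mu b \<gamma> \<phi> x)
      = (\<integral>\<^sup>+p. max_surprisal (fst p 1) (fst (snd p)) \<partial>mu b \<gamma> \<phi> x)"
    by (rule nn_integral_cong_AE[OF eventually_mono]) (rule SUP_gk)
  also have "\<dots> = (\<integral>\<^sup>+j. max_surprisal (j 1) (Ssum b \<gamma> \<phi> x j) \<partial>nuN b)"
    unfolding mu_def using max_surprisal_measurable by (subst nn_integral_distr[OF embedding]) simp_all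
  also have "\<dots> \<le> ennreal (2 * card {..<b} / (1 - exp (-1)))"
    by (rule nn_integral_max_surprisal_le)
  finally show ?thesis by simp
qed

theorem lemma9p2:
  fixes b :: nat and \<gamma> :: real and \<phi> :: "real \<Rightarrow> real"
  assumes "b \<ge> 2"
    and "0 < \<gamma>" "\<gamma> < 1"
    and "\<forall>t. \<phi> (t + 1) = \<phi> t"
    and "\<exists>L. lipschitz_on L UNIV \<phi>"
  shows "(SUP x\<in>{0..<1}. \<integral>\<^sup>+ p. (SUP k\<in>{1..}. gk b \<gamma> \<phi> k p) \<partial>(mu b \<gamma> \<phi> x)) < \<infinity>"
proof -
  have "\<phi> \<in> borel_measurable borel"
    using assms(5) by (auto intro: borel_measurable_continuous_onI lipschitz_on_continuous_on)
  then have "(SUP x\<in>{0..<1}. \<integral>\<^sup>+ p. (SUP k\<in>{1..}. gk b \<gamma> \<phi> k p) \<partial>(mu b \<gamma> \<phi> x))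
      \<le> ennreal (2 * real b / (1 - exp (-1)))"
    using assms(1,2) by (intro SUP_least nn_integral_SUP_gk_le) auto
  also have "\<dots> < \<infinity>" by simp
  finally show ?thesis .
qed

end
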